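(* In the setting described in the context, the discrete contact force density $\lambda^h=(\lambda^h_1,\lambda^h_2)\in Q^h$ satisfies $$\lambda^h_1(p)\ge 0\quad\text{and}\quad \lambda^h_2(p)=0\qquad\forall p\in\mathcal{V}_h^C\cup\mathcal{M}_h^C.$$
   Context: Let $\Omega\subset\mathbb{R}^2$ be a bounded polygonal Lipschitz domain with boundary partitioned into relatively open, pairwise disjoint parts $\Gamma_D,\Gamma_N,\Gamma_C$, $\mathrm{meas}(\Gamma_D)>0$, $\overline{\Gamma_C}\subset\partial\Omega\setminus\overline{\Gamma_D}$, outward unit normal on $\Gamma_C$ equal to $e_1=(1,0)$. Let $\sigma(v)=\chi\,\mathrm{tr}(\epsilon(v))I+2\mu\epsilon(v)$ ($\chi,\mu>0$, $\epsilon(v)=\frac12(\nabla v+\nabla v^T)$), $a(w,v)=\int_\Omega\sigma(w):\epsilon(v)\,dx$, $L(v)=\int_\Omega f\cdot v\,dx+\int_{\Gamma_N}g\cdot v\,ds$ with $f\in[L^2(\Omega)]^2$, $g\in[L^2(\Gamma_N)]^2$. Let $\mathcal{T}_h$ be a regular triangulation of $\Omega$ (each of $\Gamma_D,\Gamma_N,\Gamma_C$ a union of mesh edges). $\mathcal{V}_h$ and $\mathcal{M}_h$ are the sets of vertices and edge midpoints; $\mathcal{V}_h^C$ = vertices in $\overline{\Gamma_C}$, $\mathcal{M}_h^C$ = midpoints of edges on $\Gamma_C$; $\mathcal{V}_h^D,\mathcal{M}_h^D$ analogously for $\Gamma_D$; $\mathcal{V}_h^o=\mathcal{V}_h\setminus\mathcal{V}_h^D$,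 $\mathcal{M}_h^o=\mathcal{M}_h\setminus\mathcal{M}_h^D$. $V^h=\{v\in[C(\overline\Omega)]^2: v|_T\in[P_2(T)]^2\ \forall T\in\mathcal{T}_h,\ v=0\text{ on }\Gamma_D\}$, with scalar quadratic Lagrange nodal basis $\psi_z$, $z\in\mathcal{V}_h^o\cup\mathcal{M}_h^o$. $\mathcal{K}^h=\{v^h=(v^h_1,v^h_2)\in V^h: v^h_1(z)\le0\ \forall z\in\mathcal{V}_h^C\cup\mathcal{M}_h^C\}$ and $u^h\in\mathcal{K}^h$ solves $a(u^h,v^h-u^h)\ge L(v^h-u^h)$ for all $v^h\in\mathcal{K}^h$. Split each edge of $\Gamma_C$ at its midpoint into two halves; $Q^h$ is the space of continuous $\mathbb{R}^2$-valued functions on $\overline{\Gamma_C}$ that are affine on each half, and $\phi_z$ ($z\in\mathcal{V}_h^C\cup\mathcal{M}_h^C$) are the scalar continuous piecewise affine nodal basis functions on this subdivision ($\phi_z(p)=\delta_{zp}$). For a node $z$, $\omega_z$ is the union of elements sharing $z$ and $\gamma_{z,C}=\partial\omega_z\cap\Gamma_C$. Define $\pi_h:Q^h\to V^h$ by $\pi_h v=\sum_{z\in\mathcal{V}_h^C\cup\mathcal{M}_h^C}\sum_{i=1}^2 v_i(z)\psi_z e_i$, the inner product $\langle w,v\rangle_h=\sum_{z\in\mathcal{V}_h^C\cup\mathcal{M}_h^C}w(z)\cdot v(z)\int_{\gamma_{z,C}}\phi_z\,ds$ on $Q^h$, and the discrete contact force density $\lambda^h\in Q^h$ by $\langle\lambda^h,v^h\rangle_h=L(\pi_hv^h)-a(u^h,\pi_hv^h)$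 for all $v^h\in Q^h$. *)

theory Defs
  imports "HOL-Analysis.Analysis"
begin

type_synonym pt = "real^2"

text \<open>A triangle is given by its set of three (affinely independent) vertices;
  the element itself is its convex hull. A mesh is a finite set of triangles.\<close>

definition mesh_edges :: "pt set set \<Rightarrow> pt set set" where
  "mesh_edges Th = {e. \<exists>T\<in>Th. e \<subseteq> T \<and> card e = 2}"

definition mesh_vertices :: "pt set set \<Rightarrow> pt set" where
  "mesh_vertices Th = \<Union>Th"

definition edge_midpoints :: "pt set set \<Rightarrow> pt set" where
  "edge_midpoints E = {midpoint a b | a b. {a, b} \<in> E \<and> a \<noteq> b}"

definition mesh_midpoints :: "pt set set \<Rightarrow> pt set" where
  "mesh_midpoints Th = edge_midpoints (mesh_edges Th)"

definition regular_triangulation :: "pt set set \<Rightarrow> pt set \<Rightarrow> bool" where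
  "regular_triangulation Th \<Omega> \<longleftrightarrow>
     finite Th \<and> Th \<noteq> {} \<and>
     (\<forall>T\<in>Th. card T = 3 \<and> \<not> collinear T) \<and>
     (\<forall>T\<in>Th. \<forall>T'\<in>Th. T \<noteq> T' \<longrightarrow> convex hull T \<inter> convex hull T' = convex hull (T \<inter> T')) \<and>
     closure \<Omega> = (\<Union>T\<in>Th. convex hull T)"

definition edge_union :: "pt set set \<Rightarrow> pt set" where
  "edge_union E = \<Union>{closed_segment a b | a b. {a, b} \<in> E}"

definition seg_integral :: "(pt \<Rightarrow> real) \<Rightarrow> pt set \<Rightarrow> real" where
  "seg_integral h e =
     (let p = (SOME p. e = {fst p, snd p}); a = fst p; b = snd p in
      dist a b * (LBINT t=0..1. h (a + t *\<^sub>R (b - a))))"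

definition bdry_integral :: "pt set set \<Rightarrow> pt set \<Rightarrow> (pt \<Rightarrow> real) \<Rightarrow> real" where
  "bdry_integral E S h = (\<Sum>e\<in>E. seg_integral (\<lambda>x. indicator S x * h x) e)"

definition L2_on_edge :: "(pt \<Rightarrow> pt) \<Rightarrow> pt set \<Rightarrow> bool" where
  "L2_on_edge g e \<longleftrightarrow> (\<forall>a b. e = {a, b} \<longrightarrow>
      (\<lambda>t. g (a + t *\<^sub>R (b - a))) \<in> borel_measurable (lebesgue_on {0..1}) \<and>
      set_integrable lebesgue {0..1::real} (\<lambda>t. (norm (g (a + t *\<^sub>R (b - a))))\<^sup>2))"

definition P2_on :: "pt set \<Rightarrow> (pt \<Rightarrow> real) \<Rightarrow> bool" where
  "P2_on S v \<longleftrightarrow> (\<exists>c0 c1 c2 c3 c4 c5::real. \<forall>x\<in>S.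
      v x = c0 + c1 * x$1 + c2 * x$2 + c3 * (x$1)\<^sup>2 + c4 * (x$1 * x$2) + c5 * (x$2)\<^sup>2)"

definition P1_on :: "pt set \<Rightarrow> (pt \<Rightarrow> real) \<Rightarrow> bool" where
  "P1_on S v \<longleftrightarrow> (\<exists>c0 c1 c2::real. \<forall>x\<in>S. v x = c0 + c1 * x$1 + c2 * x$2)"

definition Vh_scalar :: "pt set set \<Rightarrow> pt set \<Rightarrow> pt set \<Rightarrow> (pt \<Rightarrow> real) set" where
  "Vh_scalar Th \<Omega> GD = {v. continuous_on (closure \<Omega>) v \<and>
      (\<forall>T\<in>Th. P2_on (convex hull T) v) \<and> (\<forall>x\<in>closure GD. v x = 0)}"

definition Vh :: "pt set set \<Rightarrow> pt set \<Rightarrow> pt set \<Rightarrow> (pt \<Rightarrow> pt) set" where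
  "Vh Th \<Omega> GD = {v. continuous_on (closure \<Omega>) v \<and>
      (\<forall>T\<in>Th. \<forall>i. P2_on (convex hull T) (\<lambda>x. v x $ i)) \<and> (\<forall>x\<in>closure GD. v x = 0)}"

definition Kh :: "pt set set \<Rightarrow> pt set \<Rightarrow> pt set \<Rightarrow> pt set \<Rightarrow> (pt \<Rightarrow> pt) set" where
  "Kh Th \<Omega> GD CN = {v \<in> Vh Th \<Omega> GD. \<forall>z\<in>CN. v z $ 1 \<le> 0}"

definition half_edges :: "pt set set \<Rightarrow> pt set set" where
  "half_edges EC = {closed_segment a (midpoint a b) | a b. {a, b} \<in> EC}"

definition Qh_scalar :: "pt set set \<Rightarrow> pt set \<Rightarrow> (pt \<Rightarrow> real) set" where
  "Qh_scalar EC GC = {v. continuous_on (closure GC) v \<and>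
      (\<forall>H\<in>half_edges EC. P1_on H v) \<and> (\<forall>x. x \<notin> closure GC \<longrightarrow> v x = 0)}"

definition Qh :: "pt set set \<Rightarrow> pt set \<Rightarrow> (pt \<Rightarrow> pt) set" where
  "Qh EC GC = {v. continuous_on (closure GC) v \<and>
      (\<forall>H\<in>half_edges EC. \<forall>i. P1_on H (\<lambda>x. v x $ i)) \<and> (\<forall>x. x \<notin> closure GC \<longrightarrow> v x = 0)}"

definition grad :: "(pt \<Rightarrow> pt) \<Rightarrow> pt \<Rightarrow> real^2^2" where
  "grad v x = matrix (frechet_derivative v (at x))"

definition strain :: "(pt \<Rightarrow> pt) \<Rightarrow> pt \<Rightarrow> real^2^2" where
  "strain v x = (1/2) *\<^sub>R (grad v x + transpose (grad v x))"

definition stress :: "real \<Rightarrow> real \<Rightarrow> (pt \<Rightarrow> pt) \<Rightarrow> pt \<Rightarrow> real^2^2" where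
  "stress chi \<mu> v x = (chi * trace (strain v x)) *\<^sub>R mat 1 + (2 * \<mu>) *\<^sub>R strain v x"

definition ddot :: "real^2^2 \<Rightarrow> real^2^2 \<Rightarrow> real" where
  "ddot A B = (\<Sum>i\<in>UNIV. \<Sum>j\<in>UNIV. A$i$j * B$i$j)"

definition bil_a :: "real \<Rightarrow> real \<Rightarrow> pt set \<Rightarrow> (pt \<Rightarrow> pt) \<Rightarrow> (pt \<Rightarrow> pt) \<Rightarrow> real" where
  "bil_a chi \<mu> \<Omega> w v = (LINT x:\<Omega>|lebesgue. ddot (stress chi \<mu> w x) (strain v x))"

definition lin_L :: "pt set \<Rightarrow> (pt \<Rightarrow> pt) \<Rightarrow> pt set set \<Rightarrow> pt set \<Rightarrow> (pt \<Rightarrow> pt) \<Rightarrow> (pt \<Rightarrow> pt) \<Rightarrow> real" where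
  "lin_L \<Omega> f EN GN g v = (LINT x:\<Omega>|lebesgue. f x \<bullet> v x) + bdry_integral EN GN (\<lambda>x. g x \<bullet> v x)"

definition patch :: "pt set set \<Rightarrow> pt \<Rightarrow> pt set" where
  "patch Th z = \<Union>{convex hull T | T. T \<in> Th \<and> z \<in> convex hull T}"

definition ip_h :: "pt set set \<Rightarrow> pt set set \<Rightarrow> pt set \<Rightarrow> pt set \<Rightarrow> (pt \<Rightarrow> pt \<Rightarrow> real)
                    \<Rightarrow> (pt \<Rightarrow> pt) \<Rightarrow> (pt \<Rightarrow> pt) \<Rightarrow> real" where
  "ip_h Th EC GC CN \<phi> w v =
     (\<Sum>z\<in>CN. (w z \<bullet> v z) * bdry_integral EC (frontier (patch Th z) \<inter> GC) (\<phi> z))"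

definition pi_h :: "pt set \<Rightarrow> (pt \<Rightarrow> pt \<Rightarrow> real) \<Rightarrow> (pt \<Rightarrow> pt) \<Rightarrow> (pt \<Rightarrow> pt)" where
  "pi_h CN \<psi> v = (\<lambda>x. \<Sum>z\<in>CN. \<Sum>i\<in>UNIV. (v z $ i * \<psi> z x) *\<^sub>R axis i 1)"

end

theory Submission
  imports Defs
begin

text \<open>Testing the defining identity of the contact force with c phi_p e_k, the discrete inner
  product returns c lam_k(p) w_p, with the weight w_p the integral of phi_p over gamma_{p,C}, while
  pi_h turns the test function into c psi_p e_k. The displacement u^h + c psi_p e_k stays in K^h
  when k = 2 or c <= 0, so the variational inequality gives c lam_k(p) w_p <= 0; the choices
  (c, k) = (-1, 1), (-1, 2), (1, 2) prove the claim as soon as w_p > 0.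

  Positivity of w_p is geometric. The node p is an endpoint or the midpoint of a contact edge,
  and on a subinterval of the half of that edge next to p the basis function phi_p is at least 1/8.
  A triangle touching the relative interior of a contact edge contains the whole edge and lies on
  the side x_1 <= const (outward normal e_1), so that open edge lies on the frontier of the patch
  omega_p; and as Gamma_C is relatively open with the edges as closure, the edge contains a whole
  parameter interval of Gamma_C.\<close>

section \<open>Integrals along segments\<close>

lemma interval_integral_01_nonneg:
  fixes F :: "real \<Rightarrow> real"
  assumes "\<And>t. t \<in> {0<..<1} \<Longrightarrow> 0 \<le> F t"
  shows "0 \<le> (LBINT t=0..1. F t)"
  unfolding interval_lebesgue_integral_def set_lebesgue_integral_def
  using assms by (auto intro!: integral_nonneg_AE simp: einterval_def indicator_def)

lemma interval_integral_01_pos: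
  fixes F :: "real \<Rightarrow> real"
  assumes meas: "F \<in> borel_measurable borel"
    and bounds: "\<And>t. t \<in> {0<..<1} \<Longrightarrow> 0 \<le> F t \<and> F t \<le> B"
    and cd: "0 \<le> c" "c < d" "d \<le> 1" and \<epsilon>: "0 < \<epsilon>"
    and lower: "\<And>t. t \<in> {c<..<d} \<Longrightarrow> \<epsilon> \<le> F t"
  shows "0 < (LBINT t=0..1. F t)"
proof -
  have unit_interval: "einterval 0 1 = {0<..<1::real}" by (auto simp: einterval_def)
  have int_\<epsilon>: "integrable lborel (\<lambda>t. indicator {c<..<d::real} t *\<^sub>R \<epsilon>)"
    by (rule integrableI_bounded_set_indicator[where B=\<epsilon>]) (use cd \<epsilon> in auto)
  have int_F: "integrable lborel (\<lambda>t. indicator {0<..<1::real} t *\<^sub>R F t)"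
    by (rule integrableI_bounded_set_indicator[where B=B]) (use meas bounds in auto)
  have "0 < \<epsilon> * (d - c)" using cd \<epsilon> by simp
  also have "\<epsilon> * (d - c) = integral\<^sup>L lborel (\<lambda>t. indicator {c<..<d::real} t *\<^sub>R \<epsilon>)"
    using cd by (simp add: mult.commute)
  also have "\<dots> \<le> integral\<^sup>L lborel (\<lambda>t. indicator {0<..<1::real} t *\<^sub>R F t)"
    by (rule integral_mono[OF int_\<epsilon> int_F]) (use lower bounds cd in \<open>auto simp: indicator_def\<close>)
  finally show ?thesis
    by (simp add: interval_lebesgue_integral_def set_lebesgue_integral_def unit_interval)
qed

text \<open>The orientation used by seg_integral is chosen by SOME, so only a disjunction is known.\<close>

lemma seg_integral_doubleton:
  assumes "a \<noteq> b"
  shows "seg_integral h {a, b} = dist a b * (LBINT t=0..1. h (a + t *\<^sub>R (b - a))) \<or>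
         seg_integral h {a, b} = dist a b * (LBINT t=0..1. h (b + t *\<^sub>R (a - b)))"
proof -
  obtain a' b' where ab': "(SOME p. {a, b} = {fst p, snd p}) = (a', b')" by (rule prod.exhaust)
  have "{a, b} = {fst (a', b'), snd (a', b')}"
    unfolding ab'[symmetric] by (rule someI[where x="(a, b)"]) simp
  then have "a' = a \<and> b' = b \<or> a' = b \<and> b' = a" by (auto simp: doubleton_eq_iff)
  moreover have "seg_integral h {a, b} = dist a' b' * (LBINT t=0..1. h (a' + t *\<^sub>R (b' - a')))"
    unfolding seg_integral_def Let_def ab' by simp
  ultimately show ?thesis by (auto simp: dist_commute)
qed

lemma segment_param_in_closed_segment:
  "0 \<le> t \<Longrightarrow> t \<le> 1 \<Longrightarrow> a + t *\<^sub>R (b - a) \<in> closed_segment a b"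
  unfolding in_segment by (rule exI[of _ t]) (auto simp: algebra_simps)

lemma seg_integral_nonneg:
  assumes "a \<noteq> b" and "\<And>x. x \<in> closed_segment a b \<Longrightarrow> 0 \<le> h x"
  shows "0 \<le> seg_integral h {a, b}"
proof -
  have "0 \<le> (LBINT t=0..1. h (u + t *\<^sub>R (w - u)))" if "{u, w} = {a, b}" for u w
    using assms(2) segment_param_in_closed_segment[of _ u w] that
    by (intro interval_integral_01_nonneg) (auto simp: doubleton_eq_iff closed_segment_commute)
  from this[of a b] this[of b a] show ?thesis
    using seg_integral_doubleton[OF assms(1), of h] by (auto simp: insert_commute)
qed

lemma seg_integral_pos:
  assumes ab: "a \<noteq> b" and meas: "h \<in> borel_measurable borel"
    and bounds: "\<And>x. x \<in> closed_segment a b \<Longrightarrow> 0 \<le> h x \<and> h x \<le> B"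
    and cd: "0 \<le> c" "c < d" "d \<le> 1" and \<epsilon>: "0 < \<epsilon>"
    and lower: "\<And>t. t \<in> {c<..<d} \<Longrightarrow> \<epsilon> \<le> h (a + t *\<^sub>R (b - a))"
  shows "0 < seg_integral h {a, b}"
proof -
  have param_meas: "(\<lambda>t. h (u + t *\<^sub>R (w - u))) \<in> borel_measurable borel" for u w
    by (intro measurable_compose[OF _ meas] borel_measurable_continuous_onI continuous_intros)
  have param_bounds: "0 \<le> h (u + t *\<^sub>R (w - u)) \<and> h (u + t *\<^sub>R (w - u)) \<le> B"
    if "{u, w} = {a, b}" "t \<in> {0<..<1}" for u w t
    using bounds segment_param_in_closed_segment[of t u w] that
    by (auto simp: doubleton_eq_iff closed_segment_commute)
  have "0 < (LBINT t=0..1. h (a + t *\<^sub>R (b - a)))"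
    by (rule interval_integral_01_pos[OF param_meas param_bounds cd \<epsilon> lower]) auto
  moreover have "0 < (LBINT t=0..1. h (b + t *\<^sub>R (a - b)))"
  proof (rule interval_integral_01_pos[OF param_meas param_bounds _ _ _ \<epsilon>])
    fix t assume "t \<in> {1 - d<..<1 - c}"
    then have "\<epsilon> \<le> h (a + (1 - t) *\<^sub>R (b - a))" using lower by auto
    then show "\<epsilon> \<le> h (b + t *\<^sub>R (a - b))" by (simp add: algebra_simps)
  qed (use cd in auto)
  ultimately show ?thesis
    using seg_integral_doubleton[OF ab, of h] ab by (auto simp: zero_less_mult_iff)
qed

section \<open>Segments, edges and convex hulls\<close>

lemma closed_segment_coord_eq:
  fixes a b x :: "real^'n"
  assumes "a $ i = b $ i" and "x \<in> closed_segment a b"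
  shows "x $ i = a $ i"
proof -
  obtain u where "x = (1 - u) *\<^sub>R a + u *\<^sub>R b"
    using assms(2) unfolding in_segment by auto
  then have "x $ i = (1 - u) * a $ i + u * b $ i" by simp
  then show ?thesis using assms(1) by (simp add: algebra_simps)
qed

lemma closed_segment_coord_top_endpoint:
  fixes u w y :: "real^'n"
  assumes "u $ i < k" "w $ i \<le> k" "y \<in> closed_segment w u" "k \<le> y $ i"
  shows "y = w"
proof -
  obtain t where t: "0 \<le> t" "t \<le> 1" "y = (1 - t) *\<^sub>R w + t *\<^sub>R u"
    using assms(3) unfolding in_segment by auto
  then have "y $ i = (1 - t) * w $ i + t * u $ i" by simp
  then have "y $ i - k = t * (u $ i - k) + (1 - t) * (w $ i - k)"
    by (simp add: algebra_simps)
  moreover have "(1 - t) * (w $ i - k) \<le> 0"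
    using t assms(2) by (simp add: mult_nonneg_nonpos)
  ultimately have "t * (u $ i - k) \<ge> 0" using assms(4) by linarith
  then have "t = 0" using t(1) assms(1) by (smt (verit) mult_pos_neg)
  then show ?thesis using t(3) by simp
qed

lemma convex_hull_coord_le:
  fixes S :: "(real^'n) set"
  assumes "\<And>y. y \<in> S \<Longrightarrow> y $ i \<le> k" and "x \<in> convex hull S"
  shows "x $ i \<le> k"
proof -
  have "convex {y :: real^'n. y $ i \<le> k}"
    using convex_halfspace_le[of "axis i (1::real) :: real^'n" k] by (simp add: inner_axis')
  then have "convex hull S \<subseteq> {y. y $ i \<le> k}"
    by (rule hull_minimal[rotated]) (use assms(1) in auto)
  then show ?thesis using assms(2) by auto
qed

lemma interior_coord_not_max:
  fixes x :: "real^'n"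
  assumes "x \<in> interior S" "0 < r" "\<And>y. y \<in> S \<Longrightarrow> dist x y < r \<Longrightarrow> y $ i \<le> x $ i"
  shows False
proof -
  obtain r' where r': "0 < r'" "ball x r' \<subseteq> S" using assms(1) by (auto simp: mem_interior)
  define m where "m = min r r' / 2"
  have m: "0 < m" "m < r" "m < r'" using r' assms(2) by (auto simp: m_def)
  have "dist x (x + m *\<^sub>R axis i 1) = m" using m by (simp add: dist_norm)
  moreover from this have "x + m *\<^sub>R axis i 1 \<in> S" using r' m by auto
  ultimately have "(x + m *\<^sub>R axis i 1) $ i \<le> x $ i" using assms(3) m by fastforce
  then show False using m by simp
qed

lemma dist_segment_params:
  "dist (a + s *\<^sub>R (b - a)) (a + t *\<^sub>R (b - a)) = \<bar>s - t\<bar> * norm (b - a)"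
proof -
  have "(a + s *\<^sub>R (b - a)) - (a + t *\<^sub>R (b - a)) = (s - t) *\<^sub>R (b - a)"
    by (simp add: algebra_simps)
  then show ?thesis by (simp add: dist_norm)
qed

lemma closed_segment_param:
  assumes "z \<in> closed_segment a b"
  obtains u where "0 \<le> u" "u \<le> 1" "z = a + u *\<^sub>R (b - a)"
  using assms unfolding in_segment by (auto simp: algebra_simps)

lemma closed_segment_subset_edge_union: "{a, b} \<in> E \<Longrightarrow> closed_segment a b \<subseteq> edge_union E"
  unfolding edge_union_def by blast

lemma edge_midpoints_subset_edge_union: "edge_midpoints E \<subseteq> edge_union E"
  unfolding edge_midpoints_def edge_union_def by fastforce

lemma finite_edge_midpoints:
  assumes "finite (\<Union>E)"
  shows "finite (edge_midpoints E)"
proof (rule finite_subset)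
  show "edge_midpoints E \<subseteq> (\<lambda>(a, b). midpoint a b) ` (\<Union>E \<times> \<Union>E)"
    unfolding edge_midpoints_def by (auto simp: image_iff)
  show "finite ((\<lambda>(a, b). midpoint a b) ` (\<Union>E \<times> \<Union>E))" using assms by simp
qed

section \<open>Finite element functions\<close>

lemma P1_on_closed_segment:
  assumes "P1_on (closed_segment a m) f" "0 \<le> s" "s \<le> 1"
  shows "f ((1 - s) *\<^sub>R a + s *\<^sub>R m) = (1 - s) * f a + s * f m"
proof -
  obtain c0 c1 c2 where c: "\<And>x. x \<in> closed_segment a m \<Longrightarrow> f x = c0 + c1 * x $ 1 + c2 * x $ 2"
    using assms(1) unfolding P1_on_def by blast
  have "(1 - s) *\<^sub>R a + s *\<^sub>R m \<in> closed_segment a m"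
    unfolding in_segment using assms(2,3) by auto
  then show ?thesis using c ends_in_segment[of a m] by (simp add: algebra_simps)
qed

lemma Qh_scalar_on_half_edge:
  assumes "f \<in> Qh_scalar EC GC" "{a, b} \<in> EC" "0 \<le> t" "t \<le> 1/2"
  shows "f (a + t *\<^sub>R (b - a)) = (1 - 2 * t) * f a + (2 * t) * f (midpoint a b)"
proof -
  have "P1_on (closed_segment a (midpoint a b)) f"
    using assms(1,2) unfolding Qh_scalar_def half_edges_def by blast
  moreover have "a + t *\<^sub>R (b - a) = (1 - 2 * t) *\<^sub>R a + (2 * t) *\<^sub>R midpoint a b"
    by (simp add: midpoint_def vec_eq_iff algebra_simps)
  ultimately show ?thesis using P1_on_closed_segment[of a "midpoint a b" f "2 * t"] assms(3,4) by simp
qed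

lemma Qh_scalar_bounds_on_edge:
  assumes f: "f \<in> Qh_scalar EC GC" and ab: "{a, b} \<in> EC"
    and nodes: "f a \<in> {0..1}" "f b \<in> {0..1}" "f (midpoint a b) \<in> {0..1}"
    and x: "x \<in> closed_segment a b"
  shows "0 \<le> f x \<and> f x \<le> 1"
proof -
  obtain u where u: "0 \<le> u" "u \<le> 1" "x = a + u *\<^sub>R (b - a)" using x by (rule closed_segment_param)
  show ?thesis
  proof (cases "u \<le> 1/2")
    case True
    then show ?thesis
      using Qh_scalar_on_half_edge[OF f ab u(1) True] u nodes by (auto intro!: add_nonneg_nonneg
          convex_bound_le[of "f a" 1 "f (midpoint a b)" "1 - 2 * u" "2 * u", simplified])
  next
    case False
    have "{b, a} \<in> EC" using ab by (simp add: insert_commute)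
    moreover have "x = b + (1 - u) *\<^sub>R (a - b)" using u(3) by (simp add: algebra_simps)
    ultimately show ?thesis
      using Qh_scalar_on_half_edge[OF f, of b a "1 - u"] u False nodes
      by (auto simp: midpoint_sym intro!: add_nonneg_nonneg
          convex_bound_le[of "f b" 1 "f (midpoint a b)" "1 - 2 * (1 - u)" "2 * (1 - u)", simplified])
  qed
qed

lemma Qh_scalar_nodal_lower_bound:
  assumes f: "f \<in> Qh_scalar EC GC" and ab: "{a, b} \<in> EC"
    and ends: "f a = 1 \<and> f (midpoint a b) = 0 \<or> f a = 0 \<and> f (midpoint a b) = 1"
    and t: "t \<in> {1/16<..<7/16}"
  shows "1/8 \<le> f (a + t *\<^sub>R (b - a))"
  using Qh_scalar_on_half_edge[OF f ab, of t] ends t by auto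

lemma Qh_scalar_borel_measurable:
  assumes "f \<in> Qh_scalar EC GC"
  shows "f \<in> borel_measurable borel"
proof -
  have "f = (\<lambda>x. indicator (closure GC) x *\<^sub>R f x)"
    using assms by (auto simp: Qh_scalar_def indicator_def fun_eq_iff)
  also have "\<dots> \<in> borel_measurable borel"
    using assms by (intro borel_measurable_continuous_on_indicator) (auto simp: Qh_scalar_def)
  finally show ?thesis .
qed

lemma P1_on_scaled:
  assumes "P1_on S f"
  shows "P1_on S (\<lambda>x. c * f x)"
proof -
  obtain a0 a1 a2 where "\<forall>x\<in>S. f x = a0 + a1 * x $ 1 + a2 * x $ 2"
    using assms unfolding P1_on_def by blast
  then show ?thesis unfolding P1_on_def
    by (intro exI[of _ "c * a0"] exI[of _ "c * a1"] exI[of _ "c * a2"]) (simp add: algebra_simps)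
qed

lemma P2_on_add_scaled:
  assumes "P2_on S f" "P2_on S g"
  shows "P2_on S (\<lambda>x. f x + c * g x)"
proof -
  obtain a0 a1 a2 a3 a4 a5 where
    f: "\<And>x. x \<in> S \<Longrightarrow> f x = a0 + a1 * x$1 + a2 * x$2 + a3 * (x$1)\<^sup>2 + a4 * (x$1 * x$2) + a5 * (x$2)\<^sup>2"
    using assms(1) unfolding P2_on_def by blast
  obtain b0 b1 b2 b3 b4 b5 where
    g: "\<And>x. x \<in> S \<Longrightarrow> g x = b0 + b1 * x$1 + b2 * x$2 + b3 * (x$1)\<^sup>2 + b4 * (x$1 * x$2) + b5 * (x$2)\<^sup>2"
    using assms(2) unfolding P2_on_def by blast
  show ?thesis unfolding P2_on_def
  proof (intro exI ballI)
    fix x assume "x \<in> S"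
    then show "f x + c * g x = (a0 + c * b0) + (a1 + c * b1) * x$1 + (a2 + c * b2) * x$2
        + (a3 + c * b3) * (x$1)\<^sup>2 + (a4 + c * b4) * (x$1 * x$2) + (a5 + c * b5) * (x$2)\<^sup>2"
      unfolding f[OF \<open>x \<in> S\<close>] g[OF \<open>x \<in> S\<close>] by algebra
  qed
qed

lemma Qh_scaled_axis:
  assumes "\<phi> \<in> Qh_scalar EC GC"
  shows "(\<lambda>x. (c * \<phi> x) *\<^sub>R axis k 1) \<in> Qh EC GC"
proof -
  have "P1_on H (\<lambda>x. ((c * \<phi> x) *\<^sub>R axis k 1) $ i)" if "H \<in> half_edges EC" for H i
  proof -
    have "P1_on H (\<lambda>x. (c * axis k 1 $ i) * \<phi> x)"
      using assms that by (intro P1_on_scaled) (auto simp: Qh_scalar_def)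
    then show ?thesis by (simp add: mult_ac)
  qed
  then show ?thesis using assms unfolding Qh_def Qh_scalar_def by (auto intro!: continuous_intros)
qed

lemma Kh_add_scaled_axis:
  assumes u: "u \<in> Kh Th \<Omega> GD CN" and \<psi>: "\<psi> \<in> Vh_scalar Th \<Omega> GD"
    and \<psi>_nonneg: "\<And>z. z \<in> CN \<Longrightarrow> 0 \<le> \<psi> z" and dir: "k \<noteq> 1 \<or> c \<le> 0"
  shows "(\<lambda>x. u x + (c * \<psi> x) *\<^sub>R axis k 1) \<in> Kh Th \<Omega> GD CN"
proof -
  have "P2_on (convex hull T) (\<lambda>x. (u x + (c * \<psi> x) *\<^sub>R axis k 1) $ i)" if "T \<in> Th" for T i
  proof -
    have "P2_on (convex hull T) (\<lambda>x. u x $ i + (c * axis k 1 $ i) * \<psi> x)"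
      using u \<psi> that by (intro P2_on_add_scaled) (auto simp: Kh_def Vh_def Vh_scalar_def)
    then show ?thesis by (simp add: mult_ac)
  qed
  moreover have "(c * \<psi> z) * axis k 1 $ 1 \<le> 0" if "z \<in> CN" for z
    using dir \<psi>_nonneg[OF that] by (auto simp: axis_def mult_nonpos_nonneg)
  ultimately show ?thesis
    using u \<psi> unfolding Kh_def Vh_def Vh_scalar_def
    by (auto intro!: continuous_intros add_nonpos_nonpos)
qed

lemma pi_h_single_node:
  assumes "finite CN" "p \<in> CN" "\<And>z. z \<in> CN \<Longrightarrow> z \<noteq> p \<Longrightarrow> v z = 0"
  shows "pi_h CN \<psi> v = (\<lambda>x. \<psi> p x *\<^sub>R v p)"
proof
  fix x
  have "(\<Sum>i\<in>UNIV. (v z $ i * \<psi> z x) *\<^sub>R axis i (1::real)) = \<psi> z x *\<^sub>R v z" for z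
    by (auto simp: vec_eq_iff axis_def if_distrib sum.If_cases cong del: if_weak_cong)
  then have "pi_h CN \<psi> v x = (\<Sum>z\<in>CN. \<psi> z x *\<^sub>R v z)" by (simp add: pi_h_def)
  also have "\<dots> = \<psi> p x *\<^sub>R v p"
    using assms by (subst sum.remove[OF assms(1,2)]) (auto intro!: sum.neutral)
  finally show "pi_h CN \<psi> v x = \<psi> p x *\<^sub>R v p" .
qed

lemma ip_h_single_node:
  assumes "finite CN" "p \<in> CN" "\<And>z. z \<in> CN \<Longrightarrow> z \<noteq> p \<Longrightarrow> v z = 0"
  shows "ip_h Th EC GC CN \<phi> w v = (w p \<bullet> v p) * bdry_integral EC (frontier (patch Th p) \<inter> GC) (\<phi> p)"
  unfolding ip_h_def using assms by (subst sum.remove[OF assms(1,2)]) (auto intro!: sum.neutral)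

section \<open>Contact edges and contact weights\<close>

text \<open>The last two assumptions are the mesh form of the outward normal e_1 on Gamma_C: each
  contact edge is vertical and every triangle carrying it lies on the side x_1 <= const.\<close>

locale contact_triangulation =
  fixes Th EC :: "pt set set" and GC :: "pt set"
  assumes finite_mesh: "finite Th"
    and card_triangle: "\<And>T. T \<in> Th \<Longrightarrow> card T = 3"
    and conforming: "\<And>T T'. T \<in> Th \<Longrightarrow> T' \<in> Th \<Longrightarrow> T \<noteq> T' \<Longrightarrow>
                       convex hull T \<inter> convex hull T' = convex hull (T \<inter> T')"
    and contact_mesh_edges: "EC \<subseteq> mesh_edges Th"
    and closure_contact: "closure GC = edge_union EC"
    and openin_contact: "openin (top_of_set (closure GC)) GC"
    and contact_edge_coord: "\<And>a b. {a, b} \<in> EC \<Longrightarrow> a $ 1 = b $ 1"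
    and contact_edge_top: "\<And>a b T c. {a, b} \<in> EC \<Longrightarrow> T \<in> Th \<Longrightarrow> {a, b} \<subseteq> T \<Longrightarrow>
                             c \<in> T - {a, b} \<Longrightarrow> c $ 1 < a $ 1"
begin

lemma finite_triangle: "T \<in> Th \<Longrightarrow> finite T"
  using card_triangle card.infinite by fastforce

lemma closed_convex_hull_triangle: "T \<in> Th \<Longrightarrow> closed (convex hull T)"
  by (simp add: compact_imp_closed compact_convex_hull finite_imp_compact finite_triangle)

lemma card_contact_edge: "e \<in> EC \<Longrightarrow> card e = 2"
  using contact_mesh_edges unfolding mesh_edges_def by blast

lemma contact_edge_distinct: "{a, b} \<in> EC \<Longrightarrow> a \<noteq> b"
  using card_contact_edge[of "{a, b}"] by (cases "a = b") auto

lemma contact_edge_triangleE: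
  assumes "{a, b} \<in> EC"
  obtains T where "T \<in> Th" "{a, b} \<subseteq> T"
  using assms contact_mesh_edges unfolding mesh_edges_def by blast

lemma contact_edgeE:
  assumes "e \<in> EC"
  obtains a b where "e = {a, b}"
  using card_contact_edge[OF assms] by (auto simp: card_2_iff)

lemma triangle_coord_le_contact_edge:
  assumes "{a, b} \<in> EC" "T \<in> Th" "{a, b} \<subseteq> T" "y \<in> convex hull T"
  shows "y $ 1 \<le> a $ 1"
proof (rule convex_hull_coord_le[OF _ assms(4)])
  fix c assume "c \<in> T"
  then show "c $ 1 \<le> a $ 1"
    using contact_edge_top[OF assms(1-3), of c] contact_edge_coord[OF assms(1)]
    by (cases "c \<in> {a, b}") auto
qed

text \<open>Conformity reduces the intersection with the triangle carrying the edge to a common face,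
  and every face of that triangle other than the edge lies strictly below the edge.\<close>

lemma contact_edge_subset_triangle:
  assumes ab: "{a, b} \<in> EC" and x: "x \<in> open_segment a b"
    and T': "T' \<in> Th" "x \<in> convex hull T'"
  shows "{a, b} \<subseteq> T'"
proof -
  obtain T where T: "T \<in> Th" "{a, b} \<subseteq> T" using contact_edge_triangleE[OF ab] .
  have x_seg: "x \<in> closed_segment a b" "x \<noteq> a" "x \<noteq> b"
    using x by (auto simp: open_segment_def)
  have x1: "x $ 1 = a $ 1" using closed_segment_coord_eq[OF contact_edge_coord[OF ab] x_seg(1)] .
  show ?thesis
  proof (cases "T' = T")
    case False
    have "x \<in> convex hull T"
      using x_seg(1) hull_mono[OF T(2)] by (auto simp: segment_convex_hull)
    then have x_common: "x \<in> convex hull (T \<inter> T')"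
      using conforming[OF T(1) T'(1) False[symmetric]] T'(2) by blast
    have "card (T - {a, b}) = 1"
      using card_triangle[OF T(1)] T(2) contact_edge_distinct[OF ab] finite_triangle[OF T(1)]
      by (simp add: card_Diff_subset)
    then obtain c where c: "T - {a, b} = {c}" by (auto simp: card_Suc_eq)
    have c1: "c $ 1 < a $ 1" using contact_edge_top[OF ab T] c by auto
    have "u \<in> T'" if uw: "{u, w} = {a, b}" for u w
    proof (rule ccontr)
      assume "u \<notin> T'"
      then have "T \<inter> T' \<subseteq> {w, c}" using c uw by (auto simp: doubleton_eq_iff)
      then have "x \<in> closed_segment w c"
        using x_common hull_mono[of "T \<inter> T'" "{w, c}"] by (auto simp: segment_convex_hull)
      moreover have "w $ 1 = a $ 1" using uw contact_edge_coord[OF ab] by (auto simp: doubleton_eq_iff)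
      ultimately have "x = w" using closed_segment_coord_top_endpoint[of c 1 "a $ 1" w x] c1 x1 by simp
      then show False using uw x_seg by (auto simp: doubleton_eq_iff)
    qed
    from this[of a b] this[of b a] show ?thesis by (auto simp: insert_commute)
  qed (use T in simp)
qed

lemma contact_edges_overlap_eq:
  assumes ab: "{a, b} \<in> EC" and ab': "{a', b'} \<in> EC"
    and y: "y \<in> open_segment a b" "y \<in> closed_segment a' b'"
  shows "{a', b'} = {a, b}"
proof -
  obtain T' where T': "T' \<in> Th" "{a', b'} \<subseteq> T'" using contact_edge_triangleE[OF ab'] .
  have "y \<in> convex hull T'"
    using y(2) hull_mono[OF T'(2)] by (auto simp: segment_convex_hull)
  then have abT': "{a, b} \<subseteq> T'" using contact_edge_subset_triangle[OF ab y(1) T'(1)] by blast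
  have y_seg: "y \<in> closed_segment a b" "y \<noteq> a" "y \<noteq> b"
    using y(1) by (auto simp: open_segment_def)
  have y1: "y $ 1 = a $ 1" using closed_segment_coord_eq[OF contact_edge_coord[OF ab] y_seg(1)] .
  have "u \<in> {a, b}" if uw: "{u, w} = {a', b'}" for u w
  proof (rule ccontr)
    assume u: "u \<notin> {a, b}"
    have "u \<in> T'" "w \<in> T'" using uw T'(2) by (auto simp: doubleton_eq_iff)
    then have "u $ 1 < a $ 1" "w $ 1 \<le> a $ 1"
      using u contact_edge_top[OF ab T'(1) abT'] triangle_coord_le_contact_edge[OF ab T'(1) abT']
      by (auto intro: hull_inc)
    moreover have "y \<in> closed_segment w u"
      using y(2) uw by (auto simp: doubleton_eq_iff closed_segment_commute)
    ultimately have "y = w" using closed_segment_coord_top_endpoint[of u 1 "a $ 1" w y] y1 by simp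
    then have "w \<in> {a, b}"
      using contact_edge_top[OF ab T'(1) abT', of w] \<open>w \<in> T'\<close> y1 by (cases "w \<in> {a, b}") auto
    then show False using \<open>y = w\<close> y_seg by auto
  qed
  from this[of a' b'] this[of b' a'] show ?thesis
    using contact_edge_distinct[OF ab] contact_edge_distinct[OF ab']
    by (auto simp: insert_commute doubleton_eq_iff)
qed

lemma open_contact_segment_subset_frontier_patch:
  assumes ab: "{a, b} \<in> EC" and T: "T \<in> Th" "{a, b} \<subseteq> T" and p: "p \<in> convex hull T"
  shows "open_segment a b \<subseteq> frontier (patch Th p)"
proof
  fix x assume x: "x \<in> open_segment a b"
  have x_seg: "x \<in> closed_segment a b" using x by (simp add: open_segment_def)
  have x1: "x $ 1 = a $ 1" using closed_segment_coord_eq[OF contact_edge_coord[OF ab] x_seg] .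
  have "x \<in> convex hull T" using x_seg hull_mono[OF T(2)] by (auto simp: segment_convex_hull)
  then have "x \<in> patch Th p" unfolding patch_def using T(1) p by blast
  define D where "D = \<Union>{convex hull T' | T'. T' \<in> Th \<and> x \<notin> convex hull T'}"
  have "closed D"
    unfolding D_def using finite_mesh closed_convex_hull_triangle by (auto intro!: closed_Union)
  moreover have "x \<notin> D" unfolding D_def by blast
  ultimately obtain r where r: "0 < r" "ball x r \<subseteq> - D"
    using open_contains_ball[of "- D"] by blast
  have "y $ 1 \<le> x $ 1" if "y \<in> patch Th p" "dist x y < r" for y
  proof -
    obtain T' where T': "T' \<in> Th" "y \<in> convex hull T'" using \<open>y \<in> patch Th p\<close> unfolding patch_def by blast
    have "y \<notin> D" using r that(2) by auto
    then have "x \<in> convex hull T'" using T' unfolding D_def by blast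
    then have "{a, b} \<subseteq> T'" using contact_edge_subset_triangle[OF ab x T'(1)] by blast
    then show ?thesis using triangle_coord_le_contact_edge[OF ab T'(1) _ T'(2)] x1 by simp
  qed
  then have "x \<notin> interior (patch Th p)" using interior_coord_not_max r(1) by blast
  then show "x \<in> frontier (patch Th p)"
    using \<open>x \<in> patch Th p\<close> closure_subset by (auto simp: frontier_def)
qed

lemma finite_contact_edges: "finite EC"
proof (rule finite_subset)
  show "EC \<subseteq> Pow (\<Union>Th)" using contact_mesh_edges unfolding mesh_edges_def by blast
  show "finite (Pow (\<Union>Th))" using finite_mesh finite_triangle by simp
qed

lemma closure_contact_near_open_segment:
  assumes ab: "{a, b} \<in> EC" and y: "y \<in> open_segment a b"
  obtains r where "0 < r" "\<And>z. z \<in> closure GC \<Longrightarrow> dist y z < r \<Longrightarrow> z \<in> closed_segment a b"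
proof -
  define F where "F = (\<Union>e \<in> EC - {{a, b}}. convex hull e)"
  have "closed (convex hull e)" if e: "e \<in> EC" for e
  proof -
    obtain a' b' where "e = {a', b'}" using contact_edgeE[OF e] .
    then show ?thesis by (simp add: segment_convex_hull[symmetric])
  qed
  then have "closed F" unfolding F_def using finite_contact_edges by (intro closed_UN) auto
  moreover have "y \<notin> F"
  proof
    assume "y \<in> F"
    then obtain e where e: "e \<in> EC" "e \<noteq> {a, b}" "y \<in> convex hull e" unfolding F_def by blast
    obtain a' b' where "e = {a', b'}" using contact_edgeE[OF e(1)] .
    then show False using contact_edges_overlap_eq[OF ab _ y] e by (simp add: segment_convex_hull)
  qed
  ultimately obtain r where r: "0 < r" "ball y r \<subseteq> - F"
    using open_contains_ball[of "- F"] by blast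
  show ?thesis
  proof (rule that[OF r(1)])
    fix z assume z: "z \<in> closure GC" "dist y z < r"
    then obtain a' b' where ab': "{a', b'} \<in> EC" "z \<in> closed_segment a' b'"
      unfolding closure_contact edge_union_def by blast
    have "z \<notin> F" using r z(2) by auto
    then have "{a', b'} = {a, b}" using ab' unfolding F_def by (auto simp: segment_convex_hull)
    then show "z \<in> closed_segment a b"
      using ab'(2) by (auto simp: doubleton_eq_iff closed_segment_commute)
  qed
qed

lemma contact_edge_param_near_contact:
  assumes ab: "{a, b} \<in> EC" and s: "0 < s" "s < 1" and \<eta>: "0 < \<eta>"
  obtains u where "\<bar>u - s\<bar> < \<eta>" "a + u *\<^sub>R (b - a) \<in> GC"
proof -
  have len: "0 < norm (b - a)" using contact_edge_distinct[OF ab] by simp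
  define y where "y = a + s *\<^sub>R (b - a)"
  have "y \<in> open_segment a b"
    unfolding in_segment(2) y_def using contact_edge_distinct[OF ab] s
    by (intro conjI exI[of _ s]) (simp_all add: algebra_simps)
  then obtain r where r: "0 < r" "\<And>z. z \<in> closure GC \<Longrightarrow> dist y z < r \<Longrightarrow> z \<in> closed_segment a b"
    using closure_contact_near_open_segment[OF ab] by blast
  have "y \<in> closure GC"
    using closed_segment_subset_edge_union[OF ab] \<open>y \<in> open_segment a b\<close> closure_contact
    by (auto simp: open_segment_def)
  moreover have "0 < min r (\<eta> * norm (b - a))" using r(1) len \<eta> by simp
  ultimately obtain z where z: "z \<in> GC" "dist z y < min r (\<eta> * norm (b - a))"
    unfolding closure_approachable by blast
  then have "z \<in> closed_segment a b" using r(2)[of z] closure_subset by (auto simp: dist_commute)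
  then obtain u where u: "z = a + u *\<^sub>R (b - a)" by (rule closed_segment_param)
  have "\<bar>u - s\<bar> * norm (b - a) < \<eta> * norm (b - a)"
    using z(2) dist_segment_params[of a u b s] unfolding u y_def by simp
  then show ?thesis using that len z(1) u by simp
qed

lemma contact_edge_interval_in_contact:
  assumes ab: "{a, b} \<in> EC" and \<epsilon>: "0 < \<epsilon>" "0 \<le> s - \<epsilon>" "s + \<epsilon> \<le> 1"
  obtains c d where "s - \<epsilon> \<le> c" "c < d" "d \<le> s + \<epsilon>"
    "\<And>t. t \<in> {c<..<d} \<Longrightarrow> a + t *\<^sub>R (b - a) \<in> GC"
proof -
  have len: "0 < norm (b - a)" using contact_edge_distinct[OF ab] by simp
  obtain u where u: "\<bar>u - s\<bar> < \<epsilon> / 2" "a + u *\<^sub>R (b - a) \<in> GC"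
    using contact_edge_param_near_contact[OF ab, of s "\<epsilon> / 2"] \<epsilon> by auto
  then have u_near: "s - \<epsilon> / 2 < u" "u < s + \<epsilon> / 2" by linarith+
  obtain U where U: "open U" "GC = closure GC \<inter> U" using openin_contact unfolding openin_open by blast
  then obtain r where r: "0 < r" "ball (a + u *\<^sub>R (b - a)) r \<subseteq> U"
    using u(2) open_contains_ball by blast
  define \<delta> where "\<delta> = min (\<epsilon> / 2) (r / norm (b - a))"
  have \<delta>: "0 < \<delta>" "\<delta> \<le> \<epsilon> / 2" "\<delta> * norm (b - a) \<le> r"
    using r(1) len \<epsilon>(1) by (auto simp: \<delta>_def min_def field_simps)
  show ?thesis
  proof (rule that[of "u - \<delta>" "u + \<delta>"])
    show "s - \<epsilon> \<le> u - \<delta>" "u - \<delta> < u + \<delta>" "u + \<delta> \<le> s + \<epsilon>" using u_near \<delta> by linarith+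
    fix t assume t: "t \<in> {u - \<delta><..<u + \<delta>}"
    have "dist (a + u *\<^sub>R (b - a)) (a + t *\<^sub>R (b - a)) = \<bar>u - t\<bar> * norm (b - a)"
      by (rule dist_segment_params)
    also have "\<dots> < \<delta> * norm (b - a)"
      using t len by (intro mult_strict_right_mono) (auto simp: abs_less_iff)
    finally have in_U: "a + t *\<^sub>R (b - a) \<in> U" using r \<delta>(3) by auto
    have "0 \<le> t" "t \<le> 1" using t u_near \<delta>(2) \<epsilon>(2,3) by auto
    then have "a + t *\<^sub>R (b - a) \<in> closure GC"
      using closure_contact closed_segment_subset_edge_union[OF ab] segment_param_in_closed_segment
      by blast
    with in_U show "a + t *\<^sub>R (b - a) \<in> GC" using U(2) by blast
  qed
qed

lemma mesh_vertex_notin_open_contact_segment: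
  assumes ab: "{a, b} \<in> EC" and p: "p \<in> mesh_vertices Th"
  shows "p \<notin> open_segment a b"
proof
  assume p_open: "p \<in> open_segment a b"
  obtain T where T: "T \<in> Th" "p \<in> T" using p unfolding mesh_vertices_def by blast
  have "{a, b} \<subseteq> T" using contact_edge_subset_triangle[OF ab p_open T(1) hull_inc[OF T(2)]] .
  moreover have "p \<in> closed_segment a b" "p \<notin> {a, b}" using p_open by (auto simp: open_segment_def)
  ultimately have "p $ 1 < a $ 1" using contact_edge_top[OF ab T(1)] T(2) by blast
  moreover have "p $ 1 = a $ 1"
    using closed_segment_coord_eq[OF contact_edge_coord[OF ab] \<open>p \<in> closed_segment a b\<close>] .
  ultimately show False by simp
qed

definition contact_nodes :: "pt set" where
  "contact_nodes = mesh_vertices Th \<inter> closure GC \<union> edge_midpoints EC"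

lemma finite_contact_nodes: "finite contact_nodes"
proof -
  have "finite (mesh_vertices Th)"
    unfolding mesh_vertices_def using finite_mesh finite_triangle by blast
  moreover have "\<Union>EC \<subseteq> mesh_vertices Th"
    using contact_mesh_edges unfolding mesh_edges_def mesh_vertices_def by blast
  ultimately show ?thesis
    unfolding contact_nodes_def by (auto intro: finite_edge_midpoints finite_subset)
qed

lemma contact_edge_nodes:
  assumes "{a, b} \<in> EC"
  shows "a \<in> contact_nodes" "midpoint a b \<in> contact_nodes"
proof -
  obtain T where "T \<in> Th" "{a, b} \<subseteq> T" using contact_edge_triangleE[OF assms] .
  then have "a \<in> mesh_vertices Th" unfolding mesh_vertices_def by blast
  moreover have "a \<in> closure GC"
    using closed_segment_subset_edge_union[OF assms] closure_contact by auto
  ultimately show "a \<in> contact_nodes" unfolding contact_nodes_def by blast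
  show "midpoint a b \<in> contact_nodes"
    unfolding contact_nodes_def edge_midpoints_def using assms contact_edge_distinct[OF assms] by blast
qed

lemma contact_nodeE:
  assumes "p \<in> contact_nodes"
  obtains a b where "{a, b} \<in> EC" "p = a \<or> p = midpoint a b"
proof (cases "p \<in> edge_midpoints EC")
  case True
  then show ?thesis using that unfolding edge_midpoints_def by blast
next
  case False
  then have p: "p \<in> mesh_vertices Th" "p \<in> closure GC" using assms unfolding contact_nodes_def by auto
  then obtain a b where ab: "{a, b} \<in> EC" "p \<in> closed_segment a b"
    unfolding closure_contact edge_union_def by blast
  then have "p = a \<or> p = b"
    using mesh_vertex_notin_open_contact_segment[OF ab(1) p(1)] by (auto simp: open_segment_def)
  moreover have "{b, a} \<in> EC" using ab(1) by (simp add: insert_commute)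
  ultimately show ?thesis using that ab(1) by blast
qed

lemma contact_Qh_scalar_bounds:
  assumes f: "f \<in> Qh_scalar EC GC" and nodes: "\<And>q. q \<in> contact_nodes \<Longrightarrow> f q \<in> {0..1}"
    and ab: "{a, b} \<in> EC" and x: "x \<in> closed_segment a b"
  shows "0 \<le> f x \<and> f x \<le> 1"
proof (rule Qh_scalar_bounds_on_edge[OF f ab _ _ _ x])
  have "{b, a} \<in> EC" using ab by (simp add: insert_commute)
  then show "f a \<in> {0..1}" "f b \<in> {0..1}" "f (midpoint a b) \<in> {0..1}"
    using nodes contact_edge_nodes ab by auto
qed

lemma contact_in_borel: "GC \<in> sets borel"
proof -
  obtain U where "open U" "GC = closure GC \<inter> U" using openin_contact unfolding openin_open by blast
  then show ?thesis by (metis borel_closed borel_open closed_closure sets.Int)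
qed

lemma contact_edge_weight_pos:
  assumes f: "f \<in> Qh_scalar EC GC" and ab: "{a, b} \<in> EC"
    and T: "T \<in> Th" "{a, b} \<subseteq> T" and p: "p \<in> convex hull T"
    and ends: "f a = 1 \<and> f (midpoint a b) = 0 \<or> f a = 0 \<and> f (midpoint a b) = 1"
    and bounds: "\<And>x. x \<in> closed_segment a b \<Longrightarrow> 0 \<le> f x \<and> f x \<le> 1"
  shows "0 < seg_integral (\<lambda>x. indicator (frontier (patch Th p) \<inter> GC) x * f x) {a, b}"
proof -
  define S where "S = frontier (patch Th p) \<inter> GC"
  have "a \<noteq> b" using contact_edge_distinct[OF ab] .
  have "S \<in> sets borel" unfolding S_def using contact_in_borel by auto
  then have "(\<lambda>x. indicator S x * f x) \<in> borel_measurable borel"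
    using Qh_scalar_borel_measurable[OF f] by (intro borel_measurable_times borel_measurable_indicator)
  moreover obtain c d where cd: "1/16 \<le> c" "c < d" "d \<le> 7/16"
    and in_contact: "\<And>t. t \<in> {c<..<d} \<Longrightarrow> a + t *\<^sub>R (b - a) \<in> GC"
    using contact_edge_interval_in_contact[OF ab, of "3/16" "1/4"] by auto
  moreover have "1/8 \<le> indicator S (a + t *\<^sub>R (b - a)) * f (a + t *\<^sub>R (b - a))"
    if t: "t \<in> {c<..<d}" for t
  proof -
    have "a + t *\<^sub>R (b - a) \<in> open_segment a b"
      unfolding in_segment(2) using \<open>a \<noteq> b\<close> t cd
      by (intro conjI exI[of _ t]) (auto simp: algebra_simps)
    then have "a + t *\<^sub>R (b - a) \<in> S"
      using open_contact_segment_subset_frontier_patch[OF ab T p] in_contact[OF t]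
      unfolding S_def by blast
    moreover have "1/8 \<le> f (a + t *\<^sub>R (b - a))"
      using Qh_scalar_nodal_lower_bound[OF f ab ends] t cd by auto
    ultimately show ?thesis by simp
  qed
  ultimately show ?thesis
    using seg_integral_pos[OF \<open>a \<noteq> b\<close>, of _ 1 c d "1/8"] bounds unfolding S_def
    by (auto simp: indicator_def)
qed

lemma contact_weight_pos:
  assumes f: "f \<in> Qh_scalar EC GC" and p: "p \<in> contact_nodes"
    and nodal: "\<And>q. q \<in> contact_nodes \<Longrightarrow> f q = (if q = p then 1 else 0)"
  shows "0 < bdry_integral EC (frontier (patch Th p) \<inter> GC) f"
proof -
  define h where "h x = indicator (frontier (patch Th p) \<inter> GC) x * f x" for x
  obtain a b where ab: "{a, b} \<in> EC" "p = a \<or> p = midpoint a b" using contact_nodeE[OF p] .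
  obtain T where T: "T \<in> Th" "{a, b} \<subseteq> T" using contact_edge_triangleE[OF ab(1)] .
  have "closed_segment a b \<subseteq> convex hull T" using T(2) by (simp add: segment_convex_hull hull_mono)
  then have "p \<in> convex hull T" using ab(2) by auto
  moreover have "f a = 1 \<and> f (midpoint a b) = 0 \<or> f a = 0 \<and> f (midpoint a b) = 1"
    using nodal contact_edge_nodes[OF ab(1)] ab(2) contact_edge_distinct[OF ab(1)] by auto
  moreover have bounds: "0 \<le> f x \<and> f x \<le> 1" if "{a', b'} \<in> EC" "x \<in> closed_segment a' b'" for a' b' x
    using contact_Qh_scalar_bounds[OF f _ that] nodal by simp
  ultimately have "0 < seg_integral h {a, b}"
    unfolding h_def using contact_edge_weight_pos[OF f ab(1) T] bounds[OF ab(1)] by blast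
  also have "\<dots> \<le> (\<Sum>e\<in>EC. seg_integral h e)"
  proof (rule member_le_sum[OF ab(1) _ finite_contact_edges])
    fix e assume "e \<in> EC - {{a, b}}"
    then obtain a' b' where "e = {a', b'}" "{a', b'} \<in> EC" using contact_edgeE by blast
    then show "0 \<le> seg_integral h e"
      using seg_integral_nonneg[OF contact_edge_distinct] bounds by (simp add: h_def indicator_def)
  qed
  finally show ?thesis unfolding bdry_integral_def h_def .
qed

end

section \<open>Sign of the contact force\<close>

lemma contact_force_component_sign:
  fixes \<phi> \<psi> :: "pt \<Rightarrow> pt \<Rightarrow> real" and uh lam :: "pt \<Rightarrow> pt"
  assumes CN: "finite CN" "p \<in> CN"
    and weight: "0 < bdry_integral EC (frontier (patch Th p) \<inter> GC) (\<phi> p)"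
    and \<phi>_p: "\<phi> p \<in> Qh_scalar EC GC" "\<And>z. z \<in> CN \<Longrightarrow> \<phi> p z = (if z = p then 1 else 0)"
    and \<psi>_p: "\<psi> p \<in> Vh_scalar Th \<Omega> GD" "\<And>z. z \<in> CN \<Longrightarrow> 0 \<le> \<psi> p z"
    and uh_K: "uh \<in> Kh Th \<Omega> GD CN"
    and uh_VI: "\<forall>v\<in>Kh Th \<Omega> GD CN.
                  bil_a chi \<mu> \<Omega> uh (\<lambda>x. v x - uh x) \<ge> lin_L \<Omega> f EN GN g (\<lambda>x. v x - uh x)"
    and lam_def: "\<forall>v\<in>Qh EC GC. ip_h Th EC GC CN \<phi> lam v
                    = lin_L \<Omega> f EN GN g (pi_h CN \<psi> v) - bil_a chi \<mu> \<Omega> uh (pi_h CN \<psi> v)"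
    and dir: "k \<noteq> 1 \<or> c \<le> 0"
  shows "c * lam p $ k \<le> 0"
proof -
  define V where "V x = (c * \<phi> p x) *\<^sub>R axis k (1::real)" for x
  define v where "v x = uh x + (c * \<psi> p x) *\<^sub>R axis k (1::real)" for x
  have V_nodes: "V z = 0" if "z \<in> CN" "z \<noteq> p" for z using \<phi>_p(2) that by (simp add: V_def)
  have V_p: "V p = c *\<^sub>R axis k 1" using \<phi>_p(2) CN(2) by (simp add: V_def)
  have "pi_h CN \<psi> V = (\<lambda>x. \<psi> p x *\<^sub>R V p)" using CN V_nodes by (rule pi_h_single_node)
  also have "\<dots> = (\<lambda>x. v x - uh x)" by (simp add: v_def V_p mult.commute)
  finally have "pi_h CN \<psi> V = (\<lambda>x. v x - uh x)" .
  moreover have "v \<in> Kh Th \<Omega> GD CN"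
    unfolding v_def using Kh_add_scaled_axis[OF uh_K \<psi>_p dir] .
  moreover have "V \<in> Qh EC GC" unfolding V_def using Qh_scaled_axis[OF \<phi>_p(1)] .
  ultimately have "ip_h Th EC GC CN \<phi> lam V \<le> 0" using lam_def uh_VI by simp
  moreover have "ip_h Th EC GC CN \<phi> lam V = (lam p \<bullet> V p) * bdry_integral EC (frontier (patch Th p) \<inter> GC) (\<phi> p)"
    using CN V_nodes by (rule ip_h_single_node)
  ultimately have "c * lam p $ k * bdry_integral EC (frontier (patch Th p) \<inter> GC) (\<phi> p) \<le> 0"
    using V_p by (simp add: inner_axis mult_ac)
  then show ?thesis using weight by (simp add: mult_le_0_iff)
qed

lemma contact_triangulationI:
  assumes tri: "regular_triangulation Th \<Omega>"
    and edges: "EC \<subseteq> mesh_edges Th" "closure GC = edge_union EC"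
    and open_C: "openin (top_of_set (frontier \<Omega>)) GC" "closure GC \<subseteq> frontier \<Omega>"
    and normal_C: "\<forall>e\<in>EC. \<forall>T\<in>Th. e \<subseteq> T \<longrightarrow>
           (\<forall>a\<in>e. \<forall>b\<in>e. a $ 1 = b $ 1) \<and> (\<forall>a\<in>e. \<forall>c\<in>T - e. c $ 1 < a $ 1)"
  shows "contact_triangulation Th EC GC"
proof
  show "openin (top_of_set (closure GC)) GC"
    using openin_subset_trans[OF open_C(1) closure_subset open_C(2)] .
  show "a $ 1 = b $ 1" if "{a, b} \<in> EC" for a b
    using that edges(1) normal_C unfolding mesh_edges_def by blast
qed (use tri edges normal_C in \<open>auto simp: regular_triangulation_def\<close>)

lemma contact_nodes_free:
  assumes "EC \<subseteq> mesh_edges Th" "closure GC = edge_union EC"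
    and "closure GD = edge_union ED" "closure GC \<inter> closure GD = {}"
  shows "mesh_vertices Th \<inter> closure GC \<union> edge_midpoints EC
           \<subseteq> (mesh_vertices Th - mesh_vertices Th \<inter> closure GD) \<union> (mesh_midpoints Th - edge_midpoints ED)"
proof -
  have "edge_midpoints EC \<subseteq> mesh_midpoints Th"
    using assms(1) unfolding mesh_midpoints_def edge_midpoints_def by blast
  then show ?thesis
    using assms(2-4) edge_midpoints_subset_edge_union[of EC] edge_midpoints_subset_edge_union[of ED]
    by blast
qed

theorem lemma3p1:
  fixes \<Omega> GD GN GC :: "pt set"
    and Th ED EN EC :: "pt set set"
    and chi \<mu> :: real
    and f g :: "pt \<Rightarrow> pt"
    and \<psi> \<phi> :: "pt \<Rightarrow> pt \<Rightarrow> real"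
    and uh lam :: "pt \<Rightarrow> pt"
  defines "Vn \<equiv> mesh_vertices Th"
    and "Mn \<equiv> mesh_midpoints Th"
    and "VC \<equiv> mesh_vertices Th \<inter> closure GC"
    and "MC \<equiv> edge_midpoints EC"
    and "VD \<equiv> mesh_vertices Th \<inter> closure GD"
    and "MD \<equiv> edge_midpoints ED"
  assumes dom: "open \<Omega>" "connected \<Omega>" "bounded \<Omega>"
    and tri: "regular_triangulation Th \<Omega>"
    and edgesD: "ED \<subseteq> mesh_edges Th" "closure GD = edge_union ED"
    and edgesN: "EN \<subseteq> mesh_edges Th" "closure GN = edge_union EN"
    and edgesC: "EC \<subseteq> mesh_edges Th" "closure GC = edge_union EC"
    and parts_open: "openin (top_of_set (frontier \<Omega>)) GD"
        "openin (top_of_set (frontier \<Omega>)) GN" "openin (top_of_set (frontier \<Omega>)) GC"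
    and parts_disj: "GD \<inter> GN = {}" "GD \<inter> GC = {}" "GN \<inter> GC = {}"
    and parts_cover: "frontier \<Omega> = closure (GD \<union> GN \<union> GC)"
    and measD: "ED \<noteq> {}"
    and GC_sep: "closure GC \<subseteq> frontier \<Omega> - closure GD"
    and normal_C: "\<forall>e\<in>EC. \<forall>T\<in>Th. e \<subseteq> T \<longrightarrow>
           (\<forall>a\<in>e. \<forall>b\<in>e. a $ 1 = b $ 1) \<and> (\<forall>a\<in>e. \<forall>c\<in>T - e. c $ 1 < a $ 1)"
    and lame: "chi > 0" "\<mu> > 0"
    and f_L2: "f \<in> borel_measurable lebesgue" "set_integrable lebesgue \<Omega> (\<lambda>x. (norm (f x))\<^sup>2)"
    and g_L2: "\<forall>e\<in>EN. L2_on_edge g e"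
    and psi_basis: "\<forall>z\<in>(Vn - VD) \<union> (Mn - MD). \<psi> z \<in> Vh_scalar Th \<Omega> GD \<and>
                      (\<forall>p\<in>Vn \<union> Mn. \<psi> z p = (if p = z then 1 else 0))"
    and phi_basis: "\<forall>z\<in>VC \<union> MC. \<phi> z \<in> Qh_scalar EC GC \<and>
                      (\<forall>p\<in>VC \<union> MC. \<phi> z p = (if p = z then 1 else 0))"
    and uh_K: "uh \<in> Kh Th \<Omega> GD (VC \<union> MC)"
    and uh_VI: "\<forall>v\<in>Kh Th \<Omega> GD (VC \<union> MC).
                  bil_a chi \<mu> \<Omega> uh (\<lambda>x. v x - uh x) \<ge> lin_L \<Omega> f EN GN g (\<lambda>x. v x - uh x)"
    and lam_Q: "lam \<in> Qh EC GC"
    and lam_def: "\<forall>v\<in>Qh EC GC.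
                  ip_h Th EC GC (VC \<union> MC) \<phi> lam v
                    = lin_L \<Omega> f EN GN g (pi_h (VC \<union> MC) \<psi> v) - bil_a chi \<mu> \<Omega> uh (pi_h (VC \<union> MC) \<psi> v)"
  shows "\<forall>p\<in>VC \<union> MC. lam p $ 1 \<ge> 0 \<and> lam p $ 2 = 0"
proof -
  interpret contact_triangulation Th EC GC
    using contact_triangulationI[OF tri edgesC parts_open(3) _ normal_C] GC_sep by blast
  have CN: "VC \<union> MC = contact_nodes" unfolding VC_def MC_def contact_nodes_def ..
  have free: "VC \<union> MC \<subseteq> (Vn - VD) \<union> (Mn - MD)"
    unfolding VC_def MC_def Vn_def VD_def Mn_def MD_def
    using contact_nodes_free[OF edgesC edgesD(2)] GC_sep by blast
  have sign: "c * lam p $ k \<le> 0" if p: "p \<in> contact_nodes" and dir: "k \<noteq> 1 \<or> c \<le> 0" for p c k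
  proof -
    have \<phi>_p: "\<phi> p \<in> Qh_scalar EC GC" "\<And>z. z \<in> contact_nodes \<Longrightarrow> \<phi> p z = (if z = p then 1 else 0)"
      using phi_basis p unfolding CN by auto
    have \<psi>_p: "\<psi> p \<in> Vh_scalar Th \<Omega> GD" "\<forall>q\<in>Vn \<union> Mn. \<psi> p q = (if q = p then 1 else 0)"
      using psi_basis p free unfolding CN by auto
    have \<psi>_nonneg: "0 \<le> \<psi> p z" if "z \<in> contact_nodes" for z
      using \<psi>_p(2) that free unfolding CN by (cases "z = p") auto
    show ?thesis
      using contact_force_component_sign[OF finite_contact_nodes p
          contact_weight_pos[OF \<phi>_p(1) p \<phi>_p(2)] \<phi>_p \<psi>_p(1) \<psi>_nonneg
          uh_K[unfolded CN] uh_VI[unfolded CN] lam_def[unfolded CN] dir] .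
  qed
  show ?thesis
    using sign[where c = "-1" and k = 1] sign[where c = "-1" and k = 2] sign[where c = 1 and k = 2]
    unfolding CN by fastforce
qed

end
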